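(* For any graph $\Gamma$, the dimer complex $X_{\mathcal{D}}(\Gamma)$ is a nonpositively curved cubed complex.
   Context: A graph is a nonempty 1-dimensional CW-complex with no loops and no isolated vertices (multiple edges allowed); $E$ is its edge set. The power group $2^E$ is the group of subsets of $E$ under symmetric difference. An even cycle is a finite set of edges forming an embedded circle with an even number of edges; two edge sets are independent if no edge of one shares a vertex with an edge of the other. $\mathcal{D}=\mathcal{D}(\Gamma)$ is the set of perfect matchings (edge sets meeting every vertex in exactly one edge). For a finite set $T$ of pairwise independent even cycles let $[T]=\bigcup_{t\in T}t$ (the product in $2^E$). The dimer complex $X_{\mathcal{D}}$ is the cubed complex with one $k$-cube for each pair $(A,S)$ where $A\in\mathcal{D}$ and $S$ is a set of $k$ pairwise independent even cycles with $[T]A\in\mathcal{D}$ for all $T\subset S$, the pairs $(A,S)$ and $([T]A,S)$ ($T\subset S$) giving the same cube; the vertices of this cube are the perfect matchings $[T]A$, $T\subset S$, and its faces are the cubes of $(A,S')$, $S'\subset S$ (so $A,B\in\mathcal{D}$ are joined by an edge iff $AB$ is an even cycle). A cubed complex is nonpositively curved if the link of each 0-cell is a simplicial complex and is a flag complex. *)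

theory Defs
  imports Main
begin

text \<open>A graph: vertex set V, edge set E, and for each edge its set of endpoints
  (exactly two distinct endpoints: no loops; multiple edges allowed since several
  edges may have the same endpoints).\<close>

definition is_graph :: "'v set \<Rightarrow> 'e set \<Rightarrow> ('e \<Rightarrow> 'v set) \<Rightarrow> bool" where
  "is_graph V E inc \<longleftrightarrow> E \<noteq> {} \<and> (\<forall>e\<in>E. inc e \<subseteq> V \<and> card (inc e) = 2)
     \<and> (\<forall>v\<in>V. \<exists>e\<in>E. v \<in> inc e)"

definition verts_of :: "('e \<Rightarrow> 'v set) \<Rightarrow> 'e set \<Rightarrow> 'v set" where
  "verts_of inc C = \<Union>(inc ` C)"

definition symdiff :: "'a set \<Rightarrow> 'a set \<Rightarrow> 'a set" where
  "symdiff A B = (A - B) \<union> (B - A)"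

definition perfect_matching :: "'v set \<Rightarrow> 'e set \<Rightarrow> ('e \<Rightarrow> 'v set) \<Rightarrow> 'e set \<Rightarrow> bool" where
  "perfect_matching V E inc M \<longleftrightarrow> M \<subseteq> E \<and> (\<forall>v\<in>V. \<exists>!e. e \<in> M \<and> v \<in> inc e)"

definition dimers :: "'v set \<Rightarrow> 'e set \<Rightarrow> ('e \<Rightarrow> 'v set) \<Rightarrow> 'e set set" where
  "dimers V E inc = {M. perfect_matching V E inc M}"

text \<open>A cycle (finite edge set forming an embedded circle): finite, nonempty,
  every vertex touched has exactly two incident edges of C, and C is connected.\<close>
definition is_cycle :: "'e set \<Rightarrow> ('e \<Rightarrow> 'v set) \<Rightarrow> 'e set \<Rightarrow> bool" where
  "is_cycle E inc C \<longleftrightarrow> finite C \<and> C \<noteq> {} \<and> C \<subseteq> E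
     \<and> (\<forall>v\<in>verts_of inc C. card {e\<in>C. v \<in> inc e} = 2)
     \<and> (\<forall>C'. C' \<subseteq> C \<and> C' \<noteq> {} \<and> C' \<noteq> C \<longrightarrow> verts_of inc C' \<inter> verts_of inc (C - C') \<noteq> {})"

definition even_cycle :: "'e set \<Rightarrow> ('e \<Rightarrow> 'v set) \<Rightarrow> 'e set \<Rightarrow> bool" where
  "even_cycle E inc C \<longleftrightarrow> is_cycle E inc C \<and> even (card C)"

definition independent :: "('e \<Rightarrow> 'v set) \<Rightarrow> 'e set \<Rightarrow> 'e set \<Rightarrow> bool" where
  "independent inc C D \<longleftrightarrow> verts_of inc C \<inter> verts_of inc D = {}"

definition cube_ok :: "'v set \<Rightarrow> 'e set \<Rightarrow> ('e \<Rightarrow> 'v set) \<Rightarrow> 'e set \<Rightarrow> 'e set set \<Rightarrow> bool" where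
  "cube_ok V E inc A S \<longleftrightarrow> A \<in> dimers V E inc \<and> finite S
     \<and> (\<forall>s\<in>S. even_cycle E inc s)
     \<and> (\<forall>s\<in>S. \<forall>t\<in>S. s \<noteq> t \<longrightarrow> independent inc s t)
     \<and> (\<forall>T. T \<subseteq> S \<longrightarrow> symdiff (\<Union>T) A \<in> dimers V E inc)"

text \<open>The cube of (A,S), represented by its vertex set together with S; thus
  (A,S) and ([T]A,S) give the same cube.\<close>
definition cube_of :: "'e set \<Rightarrow> 'e set set \<Rightarrow> 'e set set \<times> 'e set set" where
  "cube_of A S = ({symdiff (\<Union>T) A | T. T \<subseteq> S}, S)"

definition dimer_cubes :: "'v set \<Rightarrow> 'e set \<Rightarrow> ('e \<Rightarrow> 'v set) \<Rightarrow> ('e set set \<times> 'e set set) set" where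
  "dimer_cubes V E inc = {cube_of A S | A S. cube_ok V E inc A S}"

definition cube_dim :: "'e set set \<times> 'e set set \<Rightarrow> nat" where
  "cube_dim Q = card (snd Q)"

definition cube_faces :: "'e set set \<times> 'e set set \<Rightarrow> ('e set set \<times> 'e set set) set" where
  "cube_faces Q = {cube_of B S' | B S'. B \<in> fst Q \<and> S' \<subseteq> snd Q}"

text \<open>The 1-dimensional faces of Q containing the vertex A: the vertices of the
  simplex of the link of A coming from Q.\<close>
definition edges_at :: "'e set \<Rightarrow> 'e set set \<times> 'e set set \<Rightarrow> ('e set set \<times> 'e set set) set" where
  "edges_at A Q = {e \<in> cube_faces Q. cube_dim e = 1 \<and> A \<in> fst e}"

text \<open>Number of corners of Q at the 0-cell A (Q viewed as the cube of (A, snd Q)).\<close>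
definition corners_at :: "'e set \<Rightarrow> 'e set set \<times> 'e set set \<Rightarrow> 'e set set set" where
  "corners_at A Q = {T. T \<subseteq> snd Q \<and> symdiff (\<Union>T) A = A}"

text \<open>Cubes of positive dimension containing A: they give the simplices of lk(A).\<close>
definition link_cubes :: "('e set set \<times> 'e set set) set \<Rightarrow> 'e set \<Rightarrow> ('e set set \<times> 'e set set) set" where
  "link_cubes X A = {Q \<in> X. A \<in> fst Q \<and> cube_dim Q \<ge> 1}"

text \<open>lk(A) is a simplicial complex: each cube containing A meets A in a single
  corner and contributes a simplex with cube_dim Q distinct vertices, distinct
  cubes give distinct vertex sets, and every nonempty subset of the vertex set of
  a simplex is the vertex set of a simplex.\<close>
definition link_simplicial :: "('e set set \<times> 'e set set) set \<Rightarrow> 'e set \<Rightarrow> bool" where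
  "link_simplicial X A \<longleftrightarrow>
     (\<forall>Q\<in>link_cubes X A. card (corners_at A Q) = 1 \<and> card (edges_at A Q) = cube_dim Q)
     \<and> inj_on (edges_at A) (link_cubes X A)
     \<and> (\<forall>Q\<in>link_cubes X A. \<forall>F. F \<subseteq> edges_at A Q \<and> F \<noteq> {} \<longrightarrow>
           (\<exists>Q'\<in>link_cubes X A. edges_at A Q' = F))"

text \<open>lk(A) is flag: every finite nonempty set of link vertices (edges at A) that
  are pairwise joined in the link spans a simplex.\<close>
definition link_flag :: "('e set set \<times> 'e set set) set \<Rightarrow> 'e set \<Rightarrow> bool" where
  "link_flag X A \<longleftrightarrow>
     (\<forall>F. finite F \<and> F \<noteq> {} \<and> F \<subseteq> {e\<in>X. cube_dim e = 1 \<and> A \<in> fst e}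
        \<and> (\<forall>e1\<in>F. \<forall>e2\<in>F. e1 \<noteq> e2 \<longrightarrow> (\<exists>Q\<in>link_cubes X A. edges_at A Q = {e1, e2}))
        \<longrightarrow> (\<exists>Q\<in>link_cubes X A. edges_at A Q = F))"

definition dimer_complex_npc :: "'v set \<Rightarrow> 'e set \<Rightarrow> ('e \<Rightarrow> 'v set) \<Rightarrow> bool" where
  "dimer_complex_npc V E inc \<longleftrightarrow>
     (\<forall>A\<in>dimers V E inc. link_simplicial (dimer_cubes V E inc) A
                          \<and> link_flag (dimer_cubes V E inc) A)"

end

theory Submission
  imports Defs
begin

(*
  Fix a perfect matching A.  The proof rests on two observations.
  (1) Recentering: a cube (B,S) containing A is also the cube (A,S).  This uses
      that independent cycles are edge-disjoint, so flipping the cycles of T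
      and then those of T0 amounts to flipping the cycles of T \<triangle> T0.
      Consequently the cubes at A are exactly the cubes (A,S), S nonempty,
      their edges at A are the 1-cubes (A,{s}) for s in S, and faces at A
      correspond to subsets of S.  This gives that lk(A) is simplicial.
  (2) Flipping pairwise independent alternating cycles of A simultaneously
      again yields a perfect matching, since near each vertex at most one of
      the cycles is involved.  Hence (A,S) is a cube as soon as all its
      1- and 2-faces at A are cubes, which is exactly flagness of lk(A).
*)

lemma symdiff_cancel [simp]: "symdiff s (symdiff s B) = B"
  by (auto simp: symdiff_def)

lemma symdiff_empty [simp]: "symdiff {} B = B"
  by (auto simp: symdiff_def)

lemma symdiff_assoc: "symdiff X (symdiff Y A) = symdiff (symdiff X Y) A"
  by (auto simp: symdiff_def)

lemma symdiff_eq_self_iff: "symdiff X A = A \<longleftrightarrow> X = {}"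
  by (auto simp: symdiff_def)

lemma Union_symdiff_disjoint:
  assumes disj: "\<forall>s\<in>S. \<forall>t\<in>S. s \<noteq> t \<longrightarrow> s \<inter> t = {}"
    and "T1 \<subseteq> S" "T2 \<subseteq> S"
  shows "symdiff (\<Union>T1) (\<Union>T2) = \<Union>(symdiff T1 T2)"
proof (rule set_eqI)
  fix x
  have unique: "s = t" if "s \<in> S" "t \<in> S" "x \<in> s" "x \<in> t" for s t
    using disj that by blast
  show "x \<in> symdiff (\<Union>T1) (\<Union>T2) \<longleftrightarrow> x \<in> \<Union>(symdiff T1 T2)"
    using unique assms(2,3) unfolding symdiff_def by auto
qed

text \<open>The 1-cube at A obtained by flipping the cycle s; these are the vertices
  of the link of A.\<close>

definition link_edge :: "'e set \<Rightarrow> 'e set \<Rightarrow> 'e set set \<times> 'e set set" where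
  "link_edge A s = ({A, symdiff s A}, {s})"

lemma link_edge_eq_iff [simp]: "link_edge A s = link_edge A t \<longleftrightarrow> s = t"
  by (auto simp: link_edge_def)

lemma inj_link_edge: "inj_on (link_edge A) S"
  by (auto simp: inj_on_def)

lemma link_edge_image_eq_iff: "link_edge A ` S = link_edge A ` S' \<longleftrightarrow> S = S'"
  using inj_link_edge[of A UNIV] by (rule inj_image_eq_iff)

lemma snd_cube_of [simp]: "snd (cube_of B S) = S"
  by (simp add: cube_of_def)

lemma corner_in_cube: "A \<in> fst (cube_of A S)"
  unfolding cube_of_def by (auto intro!: exI[of _ "{}"])

lemma cube_of_singleton: "cube_of A {s} = link_edge A s"
proof -
  have "{symdiff (\<Union>T) A | T. T \<subseteq> {s}} = {A, symdiff s A}"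
    by (auto simp: subset_singleton_iff) (metis Union_empty symdiff_empty, metis cSup_singleton)
  then show ?thesis by (simp add: cube_of_def link_edge_def)
qed

lemma link_edge_other_end: "link_edge (symdiff s A) s = link_edge A s"
  by (auto simp: link_edge_def)

lemma edges_at_cube:
  assumes "A \<in> fst Q"
  shows "edges_at A Q = link_edge A ` snd Q"
proof
  show "edges_at A Q \<subseteq> link_edge A ` snd Q"
  proof
    fix e assume "e \<in> edges_at A Q"
    then obtain B s where e: "e = cube_of B {s}" "B \<in> fst Q" "s \<in> snd Q" "A \<in> fst e"
      by (auto simp: edges_at_def cube_faces_def cube_dim_def card_1_singleton_iff)
    then have e_eq: "e = link_edge B s" by (simp add: cube_of_singleton)
    then have "A = B \<or> B = symdiff s A" using e(4) by (auto simp: link_edge_def)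
    then have "e = link_edge A s" using e_eq link_edge_other_end by metis
    then show "e \<in> link_edge A ` snd Q" using e(3) by blast
  qed
next
  show "link_edge A ` snd Q \<subseteq> edges_at A Q"
  proof
    fix e assume "e \<in> link_edge A ` snd Q"
    then obtain s where s: "s \<in> snd Q" "e = cube_of A {s}"
      by (auto simp: cube_of_singleton)
    then show "e \<in> edges_at A Q"
      using assms by (auto simp: edges_at_def cube_faces_def cube_dim_def corner_in_cube)
  qed
qed

lemma edges_at_cube_of: "edges_at A (cube_of A S) = link_edge A ` S"
  by (simp add: edges_at_cube corner_in_cube)

lemma cube_ok_subset:
  assumes "cube_ok V E inc A S" "S' \<subseteq> S"
  shows "cube_ok V E inc A S'"
  using assms finite_subset unfolding cube_ok_def by (meson subset_trans subsetD)

lemma independent_disjoint: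
  assumes "is_graph V E inc" "s \<subseteq> E" "independent inc s t"
  shows "s \<inter> t = {}"
proof (rule ccontr)
  assume "s \<inter> t \<noteq> {}"
  then obtain e where e: "e \<in> s" "e \<in> t" by auto
  then have "inc e \<subseteq> verts_of inc s \<inter> verts_of inc t"
    by (auto simp: verts_of_def)
  then have "inc e = {}" using assms(3) unfolding independent_def by blast
  moreover have "card (inc e) = 2" using e assms(1,2) by (auto simp: is_graph_def)
  ultimately show False by simp
qed

text \<open>If A is a vertex of the cube (B,S), then (A,S) is a valid cube description
  of the same cube: flipping T starting from A is flipping T \<triangle> T0 from B.\<close>

lemma cube_ok_recenter:
  assumes g: "is_graph V E inc" and ok: "cube_ok V E inc B S"
    and A: "A \<in> fst (cube_of B S)"
  shows "cube_ok V E inc A S \<and> cube_of A S = cube_of B S"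
proof -
  obtain T0 where T0: "T0 \<subseteq> S" "A = symdiff (\<Union>T0) B"
    using A by (auto simp: cube_of_def)
  have disj: "\<forall>s\<in>S. \<forall>t\<in>S. s \<noteq> t \<longrightarrow> s \<inter> t = {}"
    using ok independent_disjoint[OF g]
    by (auto simp: cube_ok_def even_cycle_def is_cycle_def)
  define shift where "shift T = symdiff T T0" for T
  have shift_flip: "symdiff (\<Union>T) A = symdiff (\<Union>(shift T)) B" if "T \<subseteq> S" for T
    using Union_symdiff_disjoint[OF disj that T0(1)] T0(2) symdiff_assoc
    unfolding shift_def by metis
  have shift_sub: "shift T \<subseteq> S" if "T \<subseteq> S" for T
    using that T0(1) by (auto simp: shift_def symdiff_def)
  have shift_shift: "shift (shift T) = T" for T
    by (auto simp: shift_def symdiff_def)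
  have flips_A: "symdiff (\<Union>T) A \<in> dimers V E inc" if "T \<subseteq> S" for T
    using ok shift_flip[OF that] shift_sub[OF that] unfolding cube_ok_def by auto
  then have "A \<in> dimers V E inc" by (metis empty_subsetI symdiff_empty Union_empty)
  then have ok_A: "cube_ok V E inc A S"
    using ok flips_A unfolding cube_ok_def by blast
  have "{symdiff (\<Union>T) A | T. T \<subseteq> S} = {symdiff (\<Union>T) B | T. T \<subseteq> S}" (is "?VA = ?VB")
  proof
    show "?VA \<subseteq> ?VB" using shift_flip shift_sub by blast
    show "?VB \<subseteq> ?VA"
    proof
      fix x assume "x \<in> ?VB"
      then obtain T where T: "T \<subseteq> S" "x = symdiff (\<Union>T) B" by blast
      then have "x = symdiff (\<Union>(shift T)) A"
        using shift_flip[OF shift_sub[OF T(1)]] by (simp add: shift_shift)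
      then show "x \<in> ?VA" using shift_sub[OF T(1)] by blast
    qed
  qed
  then show ?thesis using ok_A by (simp add: cube_of_def)
qed

lemma cube_in_link_cubes:
  assumes "cube_ok V E inc A S" "S \<noteq> {}"
  shows "cube_of A S \<in> link_cubes (dimer_cubes V E inc) A"
proof -
  have "card S \<ge> 1" using assms by (simp add: cube_ok_def Suc_le_eq card_gt_0_iff)
  then show ?thesis
    using assms(1) corner_in_cube by (auto simp: link_cubes_def dimer_cubes_def cube_dim_def)
qed

text \<open>By recentering, these are all the cubes at A.\<close>

lemma link_cubes_iff:
  assumes g: "is_graph V E inc"
  shows "Q \<in> link_cubes (dimer_cubes V E inc) A \<longleftrightarrow>
           (\<exists>S. cube_ok V E inc A S \<and> S \<noteq> {} \<and> Q = cube_of A S)"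
proof
  assume "Q \<in> link_cubes (dimer_cubes V E inc) A"
  then obtain B S where Q: "Q = cube_of B S" "cube_ok V E inc B S" "A \<in> fst Q" "card S \<ge> 1"
    by (auto simp: link_cubes_def dimer_cubes_def cube_dim_def)
  then show "\<exists>S. cube_ok V E inc A S \<and> S \<noteq> {} \<and> Q = cube_of A S"
    using cube_ok_recenter[OF g Q(2)] by force
qed (use cube_in_link_cubes in blast)

text \<open>If each cycle of a pairwise independent family T is alternating for the
  perfect matching A, flipping all of them at once gives a perfect matching:
  at a vertex of some cycle s only s matters, elsewhere A is unchanged.\<close>

lemma flip_independent_cycles:
  assumes A: "A \<in> dimers V E inc"
    and alt: "\<forall>s\<in>T. s \<subseteq> E \<and> symdiff s A \<in> dimers V E inc"
    and ind: "\<forall>s\<in>T. \<forall>t\<in>T. s \<noteq> t \<longrightarrow> independent inc s t"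
  shows "symdiff (\<Union>T) A \<in> dimers V E inc"
  unfolding dimers_def perfect_matching_def mem_Collect_eq
proof (intro conjI ballI)
  show "symdiff (\<Union>T) A \<subseteq> E"
    using A alt by (auto simp: symdiff_def dimers_def perfect_matching_def)
next
  fix v assume v: "v \<in> V"
  show "\<exists>!e. e \<in> symdiff (\<Union>T) A \<and> v \<in> inc e"
  proof (cases "\<exists>s\<in>T. v \<in> verts_of inc s")
    case True
    then obtain s where s: "s \<in> T" "v \<in> verts_of inc s" by auto
    have only_s: "t = s" if "t \<in> T" "e \<in> t" "v \<in> inc e" for t e
      using that ind s by (auto simp: independent_def verts_of_def)
    have "e \<in> symdiff (\<Union>T) A \<and> v \<in> inc e \<longleftrightarrow> e \<in> symdiff s A \<and> v \<in> inc e" for e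
      using s(1) only_s by (auto simp: symdiff_def)
    moreover have "\<exists>!e. e \<in> symdiff s A \<and> v \<in> inc e"
      using alt s v by (auto simp: dimers_def perfect_matching_def)
    ultimately show ?thesis by simp
  next
    case False
    then have "e \<in> symdiff (\<Union>T) A \<and> v \<in> inc e \<longleftrightarrow> e \<in> A \<and> v \<in> inc e" for e
      by (auto simp: symdiff_def verts_of_def)
    moreover have "\<exists>!e. e \<in> A \<and> v \<in> inc e"
      using A v by (auto simp: dimers_def perfect_matching_def)
    ultimately show ?thesis by simp
  qed
qed

lemma cube_ok_of_faces:
  assumes A: "A \<in> dimers V E inc" and fin: "finite S"
    and one: "\<forall>s\<in>S. cube_ok V E inc A {s}"
    and two: "\<forall>s\<in>S. \<forall>t\<in>S. s \<noteq> t \<longrightarrow> cube_ok V E inc A {s, t}"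
  shows "cube_ok V E inc A S"
proof -
  have cyc: "even_cycle E inc s" and alt: "symdiff s A \<in> dimers V E inc" if "s \<in> S" for s
    using one that unfolding cube_ok_def by (auto dest!: spec[of _ "{s}"])
  have ind: "independent inc s t" if "s \<in> S" "t \<in> S" "s \<noteq> t" for s t
    using two that by (auto simp: cube_ok_def)
  have "symdiff (\<Union>T) A \<in> dimers V E inc" if T: "T \<subseteq> S" for T
  proof (rule flip_independent_cycles[OF A])
    show "\<forall>s\<in>T. s \<subseteq> E \<and> symdiff s A \<in> dimers V E inc"
      using T cyc alt unfolding even_cycle_def is_cycle_def by blast
    show "\<forall>s\<in>T. \<forall>t\<in>T. s \<noteq> t \<longrightarrow> independent inc s t"
      using T ind by blast
  qed
  then show ?thesis using A fin cyc ind by (auto simp: cube_ok_def)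
qed

text \<open>A cube meets A in a single corner, since its cycles are nonempty.\<close>

lemma corners_at_cube_of:
  assumes "cube_ok V E inc A S"
  shows "corners_at A (cube_of A S) = {{}}"
proof -
  have "{} \<notin> S" using assms by (auto simp: cube_ok_def even_cycle_def is_cycle_def)
  then have "T = {}" if "T \<subseteq> S" "\<Union>T = {}" for T
    using that by (auto simp: Union_empty_conv)
  then show ?thesis by (auto simp: corners_at_def symdiff_eq_self_iff)
qed

lemma link_simplicial_dimers:
  assumes g: "is_graph V E inc"
  shows "link_simplicial (dimer_cubes V E inc) A"
  unfolding link_simplicial_def
proof (intro conjI ballI allI impI)
  fix Q assume "Q \<in> link_cubes (dimer_cubes V E inc) A"
  then obtain S where S: "cube_ok V E inc A S" "Q = cube_of A S"
    using link_cubes_iff[OF g] by blast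
  show "card (corners_at A Q) = 1" using corners_at_cube_of[OF S(1)] S(2) by simp
  show "card (edges_at A Q) = cube_dim Q"
    using S(2) by (simp add: edges_at_cube_of cube_dim_def card_image inj_link_edge)
next
  show "inj_on (edges_at A) (link_cubes (dimer_cubes V E inc) A)"
  proof (rule inj_onI)
    fix Q1 Q2 assume Q: "Q1 \<in> link_cubes (dimer_cubes V E inc) A"
      "Q2 \<in> link_cubes (dimer_cubes V E inc) A" "edges_at A Q1 = edges_at A Q2"
    then obtain S1 S2 where S: "Q1 = cube_of A S1" "Q2 = cube_of A S2"
      using link_cubes_iff[OF g] by meson
    then have "link_edge A ` S1 = link_edge A ` S2" using Q(3) by (simp add: edges_at_cube_of)
    then show "Q1 = Q2" using S by (simp add: link_edge_image_eq_iff)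
  qed
next
  fix Q F assume Q: "Q \<in> link_cubes (dimer_cubes V E inc) A"
    and F: "F \<subseteq> edges_at A Q \<and> F \<noteq> {}"
  then obtain S where S: "cube_ok V E inc A S" "Q = cube_of A S"
    using link_cubes_iff[OF g] by blast
  define S' where "S' = {s \<in> S. link_edge A s \<in> F}"
  have "F = link_edge A ` S'" using F S(2) by (auto simp: S'_def edges_at_cube_of)
  moreover have "cube_ok V E inc A S'" using cube_ok_subset[OF S(1)] by (simp add: S'_def)
  moreover have "S' \<noteq> {}" using F \<open>F = link_edge A ` S'\<close> by blast
  ultimately show "\<exists>Q'\<in>link_cubes (dimer_cubes V E inc) A. edges_at A Q' = F"
    using cube_in_link_cubes edges_at_cube_of by metis
qed

lemma link_vertex_iff:
  assumes g: "is_graph V E inc"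
  shows "e \<in> dimer_cubes V E inc \<and> cube_dim e = 1 \<and> A \<in> fst e \<longleftrightarrow>
           (\<exists>s. cube_ok V E inc A {s} \<and> e = link_edge A s)"
proof -
  have "e \<in> dimer_cubes V E inc \<and> cube_dim e = 1 \<and> A \<in> fst e \<longleftrightarrow>
          e \<in> link_cubes (dimer_cubes V E inc) A \<and> card (snd e) = 1"
    by (auto simp: link_cubes_def cube_dim_def)
  also have "\<dots> \<longleftrightarrow> (\<exists>s. cube_ok V E inc A {s} \<and> e = cube_of A {s})"
    by (auto simp: link_cubes_iff[OF g] card_1_singleton_iff)
  finally show ?thesis by (simp add: cube_of_singleton)
qed

text \<open>lk(A) is flag: pairwise joined link vertices (A,{s}), s in S, give
  cubes (A,{s,t}), hence (A,S) is a cube by the flipping lemma.\<close>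

lemma link_flag_dimers:
  assumes g: "is_graph V E inc" and A: "A \<in> dimers V E inc"
  shows "link_flag (dimer_cubes V E inc) A"
  unfolding link_flag_def
proof (intro allI impI)
  let ?L = "link_cubes (dimer_cubes V E inc) A"
  fix F assume F: "finite F \<and> F \<noteq> {} \<and> F \<subseteq> {e \<in> dimer_cubes V E inc. cube_dim e = 1 \<and> A \<in> fst e}
    \<and> (\<forall>e1\<in>F. \<forall>e2\<in>F. e1 \<noteq> e2 \<longrightarrow> (\<exists>Q\<in>?L. edges_at A Q = {e1, e2}))"
  define S where "S = {s. link_edge A s \<in> F}"
  have F_eq: "F = link_edge A ` S"
    using F link_vertex_iff[OF g] by (auto simp: S_def)
  have one: "cube_ok V E inc A {s}" if "s \<in> S" for s
  proof -
    have "link_edge A s \<in> F" using that by (simp add: S_def)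
    then show ?thesis using F link_vertex_iff[OF g] by auto
  qed
  have two: "cube_ok V E inc A {s, t}" if "s \<in> S" "t \<in> S" "s \<noteq> t" for s t
  proof -
    have "link_edge A s \<in> F" "link_edge A t \<in> F" "link_edge A s \<noteq> link_edge A t"
      using that by (simp_all add: S_def)
    then obtain Q where Q: "Q \<in> ?L" "edges_at A Q = {link_edge A s, link_edge A t}"
      using F by blast
    then obtain S' where S': "cube_ok V E inc A S'" "Q = cube_of A S'"
      using link_cubes_iff[OF g] by blast
    then have "link_edge A ` S' = link_edge A ` {s, t}" using Q(2) by (simp add: edges_at_cube_of)
    then have "S' = {s, t}" by (rule link_edge_image_eq_iff[THEN iffD1])
    then show ?thesis using S'(1) by simp
  qed
  have "finite S"
    using F F_eq finite_image_iff[OF inj_link_edge, of A S] by argo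
  then have "cube_ok V E inc A S" using cube_ok_of_faces[OF A] one two by blast
  moreover have "S \<noteq> {}" using F F_eq by blast
  ultimately show "\<exists>Q\<in>?L. edges_at A Q = F"
    using F_eq cube_in_link_cubes edges_at_cube_of by metis
qed

theorem theorem6p3:
  fixes V :: "'v set" and E :: "'e set" and inc :: "'e \<Rightarrow> 'v set"
  assumes "is_graph V E inc"
  shows "dimer_complex_npc V E inc"
  unfolding dimer_complex_npc_def
  using link_simplicial_dimers[OF assms] link_flag_dimers[OF assms] by blast

end
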